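(* For every $n\ge 1$, the $\mathbb{Z}$-discriminating complexity of $\mathbb{Z}^n$ is asymptotically dominated by a polynomial of degree $n-1$, i.e. $C_{\mathbb{Z}^n}^{\mathbb{Z}} \preceq (R\mapsto R^{n-1})$.
   Context: A homomorphism $\phi: G \to H$ discriminates a finite set $S\subseteq G-\{1\}$ if $1\notin\phi(S)$. For finite generating sets $X$ of $G$, $Y$ of $H$, $|\phi|_X^Y := \max_{x\in X}|\phi(x)|_Y$, and $C_{G,X}^{H,Y}(R) := \min\{|\phi|_X^Y : \phi \text{ discriminates } B_R(G,X)-\{1\}\}$, with $B_R(G,X)$ the closed word-metric ball of radius $R$. For $f,g:\mathbb{N}\to\mathbb{N}$, $f\preceq g$ means there is $K$ with $f(R)\le Kg(KR)+K$ for all $R$; the $\preceq$-class of $C_{G,X}^{H,Y}$ is independent of $X,Y$ and denoted $C_G^H$. *)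

theory Defs
  imports "HOL-Analysis.Analysis"
begin

definition word_length :: "'a::ab_group_add set \<Rightarrow> 'a \<Rightarrow> nat" where
  "word_length X g = (LEAST k. \<exists>xs. length xs = k \<and> set xs \<subseteq> X \<union> uminus ` X \<and> sum_list xs = g)"

definition word_ball :: "'a::ab_group_add set \<Rightarrow> nat \<Rightarrow> 'a set" where
  "word_ball X R = {g. word_length X g \<le> R}"

definition is_hom :: "('a::ab_group_add \<Rightarrow> 'b::ab_group_add) \<Rightarrow> bool" where
  "is_hom \<phi> \<longleftrightarrow> (\<forall>x y. \<phi> (x + y) = \<phi> x + \<phi> y)"

definition discriminates :: "('a::ab_group_add \<Rightarrow> 'b::ab_group_add) \<Rightarrow> 'a set \<Rightarrow> bool" where
  "discriminates \<phi> S \<longleftrightarrow> 0 \<notin> \<phi> ` S"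

text \<open>The size |phi|_X^Y (X finite, nonempty).\<close>
definition hom_size :: "'a::ab_group_add set \<Rightarrow> 'b::ab_group_add set \<Rightarrow> ('a \<Rightarrow> 'b) \<Rightarrow> nat" where
  "hom_size X Y \<phi> = Max ((\<lambda>x. word_length Y (\<phi> x)) ` X)"

definition disc_complexity :: "'a::ab_group_add set \<Rightarrow> 'b::ab_group_add set \<Rightarrow> nat \<Rightarrow> nat" where
  "disc_complexity X Y R = (LEAST c. \<exists>\<phi>::'a \<Rightarrow> 'b. is_hom \<phi> \<and>
      discriminates \<phi> (word_ball X R - {0}) \<and> hom_size X Y \<phi> = c)"

definition dom_preceq :: "(nat \<Rightarrow> nat) \<Rightarrow> (nat \<Rightarrow> nat) \<Rightarrow> bool" where
  "dom_preceq f g \<longleftrightarrow> (\<exists>K. \<forall>R. f R \<le> K * g (K * R) + K)"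

end

theory Submission
  imports Defs
begin

text \<open>An element g of the word ball of radius R in \<open>\<int>\<^sup>n\<close> has all coordinates of absolute value at
  most R, since its \<open>\<ell>\<^sub>1\<close>-norm is bounded by its word length. Enumerate the coordinates as
  \<open>0, \<dots>, n - 1\<close> and send g to the integer with base-\<open>(R + 1)\<close> digits the coordinates of g.
  Since 0 has no nontrivial expansion with digits of absolute value below the base, this
  homomorphism \<open>\<int>\<^sup>n \<rightarrow> \<int>\<close> is nonzero on the ball minus 0, and it maps each generator to
  a power \<open>(R + 1)\<^sup>k\<close> with \<open>k < n\<close>, of word length at most \<open>(R + 1)\<^sup>n\<^sup>-\<^sup>1\<close>.\<close>

abbreviation unit_vectors :: "(int ^ 'n::finite) set" where
  "unit_vectors \<equiv> range (\<lambda>i. axis i 1)"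

lemma word_length_le:
  assumes "set xs \<subseteq> X \<union> uminus ` X" "sum_list xs = g"
  shows "word_length X g \<le> length xs"
  unfolding word_length_def by (rule Least_le) (use assms in blast)

lemma obtain_shortest_word:
  assumes "set xs \<subseteq> X \<union> uminus ` X" "sum_list xs = g"
  obtains ys where "length ys = word_length X g" "set ys \<subseteq> X \<union> uminus ` X" "sum_list ys = g"
proof -
  have "\<exists>ys. length ys = word_length X g \<and> set ys \<subseteq> X \<union> uminus ` X \<and> sum_list ys = g"
    unfolding word_length_def by (rule LeastI_ex) (use assms in blast)
  then show thesis using that by blast
qed

lemma word_length_int_le_abs: "word_length {1::int} m \<le> nat \<bar>m\<bar>"
  using word_length_le[of "replicate (nat \<bar>m\<bar>) (sgn m)" "{1}" m]
  by (simp add: sum_list_replicate sgn_if)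

lemma sum_list_words:
  fixes f :: "'b \<Rightarrow> 'a::ab_group_add"
  assumes "finite S" "\<And>s. s \<in> S \<Longrightarrow> \<exists>xs. set xs \<subseteq> A \<and> sum_list xs = f s"
  shows "\<exists>xs. set xs \<subseteq> A \<and> sum_list xs = sum f S"
  using assms
proof (induction S rule: finite_induct)
  case empty
  show ?case by (intro exI[of _ "[]"]) auto
next
  case (insert x F)
  then obtain xs ys where "set xs \<subseteq> A" "sum_list xs = f x" "set ys \<subseteq> A" "sum_list ys = sum f F"
    by blast
  then show ?case using insert by (intro exI[of _ "xs @ ys"]) auto
qed

lemma unit_vectors_word_axis:
  "\<exists>xs. set xs \<subseteq> unit_vectors \<union> uminus ` unit_vectors \<and> sum_list xs = axis i (m::int)"
proof (cases "m = 0")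
  case True
  then show ?thesis by (intro exI[of _ "[]"]) (simp add: axis_def vec_eq_iff)
next
  case False
  then have "axis i (sgn m) = axis i 1 \<or> axis i (sgn m) = - axis i (1::int)"
    by (simp add: sgn_if axis_def vec_eq_iff)
  then have "axis i (sgn m) \<in> unit_vectors \<union> uminus ` unit_vectors" by auto
  moreover have "sum_list (replicate k (axis i s)) = axis i (int k * s)" for k and s :: int
    by (induction k) (auto simp: axis_def vec_eq_iff algebra_simps)
  ultimately show ?thesis
    by (intro exI[of _ "replicate (nat \<bar>m\<bar>) (axis i (sgn m))"]) (auto simp: abs_mult_sgn)
qed

lemma unit_vectors_generate:
  "\<exists>xs. set xs \<subseteq> unit_vectors \<union> uminus ` unit_vectors \<and> sum_list xs = (g :: int ^ 'n::finite)"
proof -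
  have "\<exists>xs. set xs \<subseteq> unit_vectors \<union> uminus ` unit_vectors \<and> sum_list xs = (\<Sum>i\<in>UNIV. axis i (g $ i))"
    by (rule sum_list_words) (auto intro: unit_vectors_word_axis)
  moreover have "(\<Sum>i\<in>UNIV. axis i (g $ i)) = g"
    by (simp add: vec_eq_iff sum_component axis_def)
  ultimately show ?thesis by simp
qed

lemma sum_abs_sum_list_le_length:
  assumes "set xs \<subseteq> unit_vectors \<union> uminus ` unit_vectors"
  shows "(\<Sum>j\<in>UNIV. \<bar>sum_list xs $ j\<bar>) \<le> int (length (xs :: (int ^ 'n::finite) list))"
  using assms
proof (induction xs)
  case Nil
  show ?case by simp
next
  case (Cons a xs)
  obtain i where "a = axis i 1 \<or> a = - axis i 1" using Cons.prems by auto
  then have "\<bar>a $ j\<bar> = (if j = i then 1 else 0)" for j by (auto simp: axis_def)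
  then have a: "(\<Sum>j\<in>UNIV. \<bar>a $ j\<bar>) = 1" by simp
  have "(\<Sum>j\<in>UNIV. \<bar>sum_list (a # xs) $ j\<bar>) \<le> (\<Sum>j\<in>UNIV. \<bar>a $ j\<bar> + \<bar>sum_list xs $ j\<bar>)"
    by (rule sum_mono) (simp add: abs_triangle_ineq)
  also have "\<dots> = 1 + (\<Sum>j\<in>UNIV. \<bar>sum_list xs $ j\<bar>)" by (simp add: sum.distrib a)
  also have "\<dots> \<le> int (length (a # xs))" using Cons by simp
  finally show ?case .
qed

lemma abs_component_le_word_length:
  "\<bar>g $ j\<bar> \<le> int (word_length unit_vectors (g :: int ^ 'n::finite))"
proof -
  obtain xs where xs: "length xs = word_length unit_vectors g"
    "set xs \<subseteq> unit_vectors \<union> uminus ` unit_vectors" "sum_list xs = g"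
    using unit_vectors_generate[of g] by (metis obtain_shortest_word)
  have "\<bar>g $ j\<bar> \<le> (\<Sum>j\<in>UNIV. \<bar>g $ j\<bar>)" by (rule member_le_sum) auto
  also have "\<dots> \<le> int (length xs)" using sum_abs_sum_list_le_length[OF xs(2)] xs(3) by simp
  finally show ?thesis using xs(1) by simp
qed

lemma digits_eq_zero_if_sum_eq_zero:
  fixes c :: "nat \<Rightarrow> int"
  assumes "\<forall>k<n. \<bar>c k\<bar> < b" "(\<Sum>k<n. c k * b ^ k) = 0"
  shows "\<forall>k<n. c k = 0"
  using assms
proof (induction n arbitrary: c)
  case 0
  show ?case by simp
next
  case (Suc n)
  have "(\<Sum>k<Suc n. c k * b ^ k) = c 0 + b * (\<Sum>k<n. c (Suc k) * b ^ k)"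
    unfolding sum.lessThan_Suc_shift by (simp add: sum_distrib_left mult.assoc mult.left_commute)
  with Suc.prems(2) have expand: "c 0 + b * (\<Sum>k<n. c (Suc k) * b ^ k) = 0" by simp
  then have dvd: "b dvd c 0" by (metis add.commute dvd_minus_iff dvd_triv_left eq_neg_iff_add_eq_0)
  have small: "\<bar>c 0\<bar> < b" using Suc.prems(1) by simp
  have c0: "c 0 = 0"
  proof (rule ccontr)
    assume "c 0 \<noteq> 0"
    then have "\<bar>b\<bar> \<le> \<bar>c 0\<bar>" using dvd by (rule dvd_imp_le_int)
    with small show False by linarith
  qed
  from small have "b \<noteq> 0" by linarith
  with expand c0 have "(\<Sum>k<n. c (Suc k) * b ^ k) = 0" by simp
  moreover have "\<forall>k<n. \<bar>c (Suc k)\<bar> < b" using Suc.prems(1) by simp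
  ultimately have "\<forall>k<n. c (Suc k) = 0" using Suc.IH[of "\<lambda>k. c (Suc k)"] by blast
  with c0 show ?case by (metis less_Suc_eq_0_disj)
qed

definition positional :: "nat \<Rightarrow> ('n::finite \<Rightarrow> nat) \<Rightarrow> int ^ 'n \<Rightarrow> int" where
  "positional b ind g = (\<Sum>i\<in>UNIV. g $ i * int b ^ ind i)"

lemma is_hom_positional: "is_hom (positional b ind)"
  unfolding is_hom_def positional_def by (simp add: sum.distrib algebra_simps)

lemma positional_axis: "positional b ind (axis i 1) = int b ^ ind i"
proof -
  have "(\<lambda>j. axis i (1::int) $ j * int b ^ ind j) = (\<lambda>j. if j = i then int b ^ ind i else 0)"
    by (auto simp: axis_def)
  then show ?thesis unfolding positional_def by (simp only:) simp
qed

lemma positional_eq_zero_imp: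
  assumes ind: "bij_betw ind (UNIV :: 'n::finite set) {0..<CARD('n)}"
    and small: "\<And>j. \<bar>g $ j\<bar> < int b" and zero: "positional b ind g = 0"
  shows "g = 0"
proof -
  define c where "c k = g $ inv_into UNIV ind k" for k
  have c_ind: "c (ind j) = g $ j" for j
    unfolding c_def using ind by (simp add: bij_betw_def)
  have "(\<Sum>k<CARD('n). c k * int b ^ k) = (\<Sum>j\<in>UNIV. c (ind j) * int b ^ ind j)"
    using sum.reindex_bij_betw[OF ind, of "\<lambda>k. c k * int b ^ k"] by (simp add: atLeast0LessThan)
  also have "\<dots> = 0" using zero unfolding positional_def c_ind .
  finally have "(\<Sum>k<CARD('n). c k * int b ^ k) = 0" .
  moreover have "\<forall>k<CARD('n). \<bar>c k\<bar> < int b" unfolding c_def using small by blast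
  ultimately have c_zero: "\<forall>k<CARD('n). c k = 0" by (rule digits_eq_zero_if_sum_eq_zero[rotated])
  have "g $ j = 0" for j
  proof -
    have "ind j < CARD('n)" using ind by (auto simp: bij_betw_def)
    with c_zero have "c (ind j) = 0" by blast
    then show ?thesis by (simp only: c_ind)
  qed
  then show ?thesis by (simp add: vec_eq_iff)
qed

lemma positional_discriminates_ball:
  assumes "bij_betw ind (UNIV :: 'n::finite set) {0..<CARD('n)}"
  shows "discriminates (positional (R + 1) ind) (word_ball unit_vectors R - {0})"
  unfolding discriminates_def
proof
  assume "0 \<in> positional (R + 1) ind ` (word_ball unit_vectors R - {0})"
  then obtain g :: "int ^ 'n" where g: "word_length unit_vectors g \<le> R" "g \<noteq> 0"
    "positional (R + 1) ind g = 0"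
    unfolding word_ball_def by force
  have "\<bar>g $ j\<bar> < int (R + 1)" for j
    using abs_component_le_word_length[of g j] g(1) by linarith
  from positional_eq_zero_imp[OF assms this g(3)] g(2) show False by simp
qed

lemma hom_size_positional_le:
  assumes "0 < b" "\<And>i. ind i < CARD('n::finite)"
  shows "hom_size unit_vectors {1} (positional b ind :: int ^ 'n \<Rightarrow> int) \<le> b ^ (CARD('n) - 1)"
  unfolding hom_size_def
proof (rule Max.boundedI)
  fix a assume "a \<in> (\<lambda>x. word_length {1} (positional b ind x)) ` unit_vectors"
  then obtain i where "a = word_length {1} (int (b ^ ind i))"
    by (auto simp: positional_axis)
  then have "a \<le> b ^ ind i" using word_length_int_le_abs[of "int b ^ ind i"] by (simp add: nat_power_eq)
  also have "\<dots> \<le> b ^ (CARD('n) - 1)"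
  proof (rule power_increasing)
    show "ind i \<le> CARD('n) - 1" using assms(2)[of i] by linarith
  qed (use assms(1) in linarith)
  finally show "a \<le> b ^ (CARD('n) - 1)" .
qed auto

lemma disc_complexity_le_hom_size:
  assumes "is_hom \<phi>" "discriminates \<phi> (word_ball X R - {0})"
  shows "disc_complexity X Y R \<le> hom_size X Y \<phi>"
  unfolding disc_complexity_def by (rule Least_le) (use assms in blast)

theorem mainTheorem8:
  shows "dom_preceq
     (disc_complexity (range (\<lambda>i::'n::finite. axis i (1::int))) {1::int})
     (\<lambda>R. R ^ (CARD('n) - 1))"
  unfolding dom_preceq_def
proof (intro exI[of _ 2] allI)
  fix R :: nat
  obtain ind where ind: "bij_betw ind (UNIV :: 'n set) {0..<CARD('n)}"
    using ex_bij_betw_finite_nat[of "UNIV :: 'n set"] by auto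
  have "disc_complexity (unit_vectors :: (int ^ 'n) set) {1::int} R
      \<le> hom_size unit_vectors {1} (positional (R + 1) ind)"
    using is_hom_positional positional_discriminates_ball[OF ind] by (rule disc_complexity_le_hom_size)
  also have "\<dots> \<le> (R + 1) ^ (CARD('n) - 1)"
    using ind by (intro hom_size_positional_le) (auto simp: bij_betw_def)
  also have "\<dots> \<le> 2 * (2 * R) ^ (CARD('n) - 1) + 2"
  proof (cases "R = 0")
    case False
    then have "(R + 1) ^ (CARD('n) - 1) \<le> (2 * R) ^ (CARD('n) - 1)" by (intro power_mono) auto
    then show ?thesis by linarith
  qed simp
  finally show "disc_complexity (unit_vectors :: (int ^ 'n) set) {1::int} R
      \<le> 2 * (2 * R) ^ (CARD('n) - 1) + 2" .
qed

end
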